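(* Let $\mathcal{B}$ be a real uniform Banach space, $\Omega:\mathcal{B}\to\mathbb{R}$ admissible, $m\in\mathbb{N}$ and $(x_i,y_i)_{i=1}^m\subset\mathcal{B}\times\mathbb{R}$ data for which the constraints $[f,x_i]=y_i$ ($i=1,\dots,m$) can be satisfied. Then there is exactly one solution $f_0$ of the regularised interpolation problem $\min\{\Omega(f): [f,x_i]=y_i\ \forall i\}$ with $f_0^*\in\operatorname{span}\{x_1^*,\dots,x_m^*\}$, and this $f_0$ is the unique minimiser of $\|f\|$ subject to $[f,x_i]=y_i$ for all $i$; in particular it does not depend on the admissible regulariser $\Omega$.
   Context: A real Banach space $\mathcal{B}$ is called uniform if it is uniformly convex and uniformly smooth (equivalently, its norm is uniformly Fréchet differentiable). On such a space there is a unique semi-inner product inducing the norm, i.e. a unique map $[\cdot,\cdot]:\mathcal{B}\times\mathcal{B}\to\mathbb{R}$ that is linear in the first argument, satisfies $[x,x]=\|x\|^2$, $|[x,y]|^2\le[x,x][y,y]$ and $[x,\lambda y]=\lambda[x,y]$ for $\lambda\in\mathbb{R}$; it is given by $[y,x]=\|x\|\lim_{t\to0}\frac{\|x+ty\|-\|x\|}{t}$ for $x\neq0$ (and $[y,0]=0$). The duality map $x\mapsto x^*$, $x^*(y)=[y,x]$, is a (nonlinear in general, but positively and negatively homogeneous) isometric bijection $\mathcal{B}\to\mathcal{B}^*$. Given $m\in\mathbb{N}$ and data $(x_i,y_i)\in\mathcal{B}\times\mathbb{R}$, $i=1,\dots,m$, the regularised interpolation problem is $\min\{\Omega(f): f\in\mathcal{B},\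 [f,x_i]=y_i\ \forall i=1,\dots,m\}$. A function $\Omega:\mathcal{B}\to\mathbb{R}$ is called admissible if for every $m\in\mathbb{N}$ and every data $(x_i,y_i)_{i=1}^m\subset\mathcal{B}\times\mathbb{R}$ for which the constraints $[f,x_i]=y_i$ can be satisfied, the regularised interpolation problem has a minimiser $f_0$ whose dual element satisfies $f_0^*=\sum_{i=1}^m c_i x_i^*$ for some $c_i\in\mathbb{R}$. *)

theory Defs
  imports "HOL-Analysis.Analysis"
begin

definition uniformly_convex :: "'a::real_normed_vector itself \<Rightarrow> bool" where
  "uniformly_convex _ \<longleftrightarrow>
     (\<forall>\<epsilon>>0. \<exists>\<delta>>0. \<forall>x y::'a. norm x \<le> 1 \<and> norm y \<le> 1 \<and> norm (x - y) \<ge> \<epsilon>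
        \<longrightarrow> norm ((1/2) *\<^sub>R (x + y)) \<le> 1 - \<delta>)"

text \<open>Uniform smoothness: the modulus of smoothness rho(tau) satisfies rho(tau)/tau \<rightarrow> 0.\<close>
definition uniformly_smooth :: "'a::real_normed_vector itself \<Rightarrow> bool" where
  "uniformly_smooth _ \<longleftrightarrow>
     (\<forall>\<epsilon>>0. \<exists>\<delta>>0. \<forall>x y::'a. norm x = 1 \<and> norm y \<le> \<delta>
        \<longrightarrow> (norm (x + y) + norm (x - y)) / 2 - 1 \<le> \<epsilon> * norm y)"

definition uniform_space :: "'a::banach itself \<Rightarrow> bool" where
  "uniform_space T \<longleftrightarrow> uniformly_convex T \<and> uniformly_smooth T"

definition sip :: "'a::real_normed_vector \<Rightarrow> 'a \<Rightarrow> real" where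
  "sip y x = (if x = 0 then 0
              else norm x * Lim (at (0::real)) (\<lambda>t. (norm (x + t *\<^sub>R y) - norm x) / t))"

text \<open>f satisfies the interpolation constraints [f, x_i] = y_i, i = 1..m (indices 0..<m).\<close>
definition interpolates :: "nat \<Rightarrow> (nat \<Rightarrow> 'a::real_normed_vector) \<Rightarrow> (nat \<Rightarrow> real) \<Rightarrow> 'a \<Rightarrow> bool" where
  "interpolates m x y f \<longleftrightarrow> (\<forall>i<m. sip f (x i) = y i)"

definition is_minimiser :: "('a::real_normed_vector \<Rightarrow> real) \<Rightarrow> nat \<Rightarrow> (nat \<Rightarrow> 'a) \<Rightarrow> (nat \<Rightarrow> real) \<Rightarrow> 'a \<Rightarrow> bool" where
  "is_minimiser \<Omega> m x y f \<longleftrightarrow> interpolates m x y f \<and> (\<forall>g. interpolates m x y g \<longrightarrow> \<Omega> f \<le> \<Omega> g)"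

text \<open>f^* = \<Sum> c_i x_i^* as functionals, where z^*(w) = [w, z].\<close>
definition dual_in_span :: "nat \<Rightarrow> (nat \<Rightarrow> 'a::real_normed_vector) \<Rightarrow> 'a \<Rightarrow> bool" where
  "dual_in_span m x f \<longleftrightarrow> (\<exists>c::nat \<Rightarrow> real. \<forall>w. sip w f = (\<Sum>i<m. c i * sip w (x i)))"

definition admissible :: "('a::real_normed_vector \<Rightarrow> real) \<Rightarrow> bool" where
  "admissible \<Omega> \<longleftrightarrow>
     (\<forall>m>0. \<forall>(x::nat \<Rightarrow> 'a) (y::nat \<Rightarrow> real). (\<exists>f. interpolates m x y f) \<longrightarrow>
        (\<exists>f0. is_minimiser \<Omega> m x y f0 \<and> dual_in_span m x f0))"

end

theory Submission
  imports Defs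
begin

text \<open>If f^* = \<Sum> c_i x_i^*, then for every interpolant g we have
  [g, f] = \<Sum> c_i y_i = [f, f] = \<parallel>f\<parallel>^2. Combined with [g, f] \<le> \<parallel>g\<parallel> \<parallel>f\<parallel>,
  this makes f the norm-minimal interpolant. Another norm-minimal interpolant g has
  \<parallel>g\<parallel> = \<parallel>f\<parallel> and [g, f] = \<parallel>f\<parallel>^2, which forces \<parallel>f + g\<parallel> \<ge> 2\<parallel>f\<parallel>; uniform
  convexity then gives g = f. An admissible \<Omega> produces such an f, so every admissible
  regulariser has the same solution with dual in the span.
  Both inequalities for [\<cdot>, \<cdot>] come from convexity of t \<mapsto> \<parallel>f + t g\<parallel>: its difference
  quotients at 0 increase with t, uniform smoothness closes the gap between the one-sided
  limits, so [g, f] lies between \<parallel>f\<parallel>(\<parallel>f\<parallel> - \<parallel>f - g\<parallel>) and \<parallel>f\<parallel>(\<parallel>f + g\<parallel> - \<parallel>f\<parallel>).\<close>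

definition norm_diff_quotient :: "'a::real_normed_vector \<Rightarrow> 'a \<Rightarrow> real \<Rightarrow> real" where
  "norm_diff_quotient x y t = (norm (x + t *\<^sub>R y) - norm x) / t"

lemma norm_diff_quotient_neg_le:
  fixes x y :: "'a::real_normed_vector"
  assumes "s > 0" and "t > 0"
  shows "norm_diff_quotient x y (-s) \<le> norm_diff_quotient x y t"
proof -
  \<comment> \<open>x is a convex combination of x - s y and x + t y\<close>
  have split: "(s + t) *\<^sub>R x = t *\<^sub>R (x + (-s) *\<^sub>R y) + s *\<^sub>R (x + t *\<^sub>R y)"
    by (simp add: algebra_simps)
  have "(s + t) * norm x = norm ((s + t) *\<^sub>R x)"
    using assms by simp
  also have "\<dots> \<le> norm (t *\<^sub>R (x + (-s) *\<^sub>R y)) + norm (s *\<^sub>R (x + t *\<^sub>R y))"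
    unfolding split by (rule norm_triangle_ineq)
  also have "\<dots> = t * norm (x + (-s) *\<^sub>R y) + s * norm (x + t *\<^sub>R y)"
    using assms by simp
  finally have "(s + t) * norm x \<le> t * norm (x + (-s) *\<^sub>R y) + s * norm (x + t *\<^sub>R y)" .
  then show ?thesis
    using assms by (simp add: norm_diff_quotient_def field_simps)
qed

lemma uniformly_smooth_norm_diff_quotient_gap:
  fixes x y :: "'a::real_normed_vector"
  assumes smooth: "uniformly_smooth TYPE('a)" and "x \<noteq> 0" and "e > 0"
  obtains d where "d > 0"
    and "\<And>t. 0 < t \<Longrightarrow> t \<le> d \<Longrightarrow> norm_diff_quotient x y t - norm_diff_quotient x y (-t) \<le> e"
proof (cases "y = 0")
  case True
  then show ?thesis
    using \<open>e > 0\<close> that[of 1] by (simp add: norm_diff_quotient_def)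
next
  case False
  have nx: "norm x > 0" and ny: "norm y > 0"
    using \<open>x \<noteq> 0\<close> False by simp_all
  obtain \<delta> where "\<delta> > 0" and \<delta>: "\<And>u w::'a. norm u = 1 \<Longrightarrow> norm w \<le> \<delta> \<Longrightarrow>
      (norm (u + w) + norm (u - w)) / 2 - 1 \<le> e / (2 * norm y) * norm w"
    using smooth \<open>e > 0\<close> ny unfolding uniformly_smooth_def
    by (metis divide_pos_pos mult_pos_pos zero_less_numeral)
  show ?thesis
  proof (rule that[of "\<delta> * norm x / norm y"])
    show "\<delta> * norm x / norm y > 0"
      using \<open>\<delta> > 0\<close> nx ny by simp
    fix t assume "0 < t" and t_le: "t \<le> \<delta> * norm x / norm y"
    define u where "u = (1 / norm x) *\<^sub>R x"
    define w where "w = (t / norm x) *\<^sub>R y"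
    have nw: "norm w = t * norm y / norm x"
      using \<open>0 < t\<close> nx by (simp add: w_def)
    have "norm u = 1"
      using nx by (simp add: u_def)
    moreover have "norm w \<le> \<delta>"
      using t_le nx ny by (simp add: nw field_simps)
    ultimately have ineq: "(norm (u + w) + norm (u - w)) / 2 - 1 \<le> e / (2 * norm y) * norm w"
      by (rule \<delta>)
    have "u + w = (1 / norm x) *\<^sub>R (x + t *\<^sub>R y)" "u - w = (1 / norm x) *\<^sub>R (x + (-t) *\<^sub>R y)"
      by (simp_all add: u_def w_def algebra_simps)
    then have "norm (u + w) = norm (x + t *\<^sub>R y) / norm x"
      "norm (u - w) = norm (x + (-t) *\<^sub>R y) / norm x"
      using nx by simp_all
    with ineq have "norm x * (norm (x + t *\<^sub>R y) + norm (x + (-t) *\<^sub>R y))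
        \<le> norm x * (e * t + 2 * norm x)"
      using nx ny by (simp add: nw field_simps)
    then have "norm (x + t *\<^sub>R y) + norm (x + (-t) *\<^sub>R y) - 2 * norm x \<le> e * t"
      using nx by simp
    then have "(norm (x + t *\<^sub>R y) + norm (x + (-t) *\<^sub>R y) - 2 * norm x) / t \<le> e"
      using \<open>0 < t\<close> by (simp add: divide_le_eq mult.commute)
    then show "norm_diff_quotient x y t - norm_diff_quotient x y (-t) \<le> e"
      by (simp add: norm_diff_quotient_def diff_divide_distrib add_divide_distrib)
  qed
qed

lemma uniformly_smooth_norm_diff_quotient_tendsto:
  fixes x y :: "'a::real_normed_vector"
  assumes smooth: "uniformly_smooth TYPE('a)" and "x \<noteq> 0"
  obtains L where "(norm_diff_quotient x y \<longlongrightarrow> L) (at 0)"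
    and "\<And>s. s > 0 \<Longrightarrow> norm_diff_quotient x y (-s) \<le> L"
    and "\<And>s. s > 0 \<Longrightarrow> L \<le> norm_diff_quotient x y s"
proof -
  let ?q = "norm_diff_quotient x y"
  define L where "L = Inf (?q ` {0<..})"
  have bdd: "bdd_below (?q ` {0<..})"
    by (rule bdd_belowI[of _ "?q (-1)"]) (auto intro: norm_diff_quotient_neg_le)
  have upper: "L \<le> ?q s" if "s > 0" for s
    unfolding L_def using that by (intro cInf_lower[OF _ bdd]) auto
  have lower: "?q (-s) \<le> L" if "s > 0" for s
    unfolding L_def using that by (intro cInf_greatest) (auto intro: norm_diff_quotient_neg_le)
  have "(?q \<longlongrightarrow> L) (at 0)"
    unfolding LIM_eq
  proof (intro allI impI)
    fix r :: real assume "r > 0"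
    then obtain d where "d > 0" and gap: "\<And>t. 0 < t \<Longrightarrow> t \<le> d \<Longrightarrow> ?q t - ?q (-t) \<le> r / 2"
      using uniformly_smooth_norm_diff_quotient_gap[OF smooth \<open>x \<noteq> 0\<close>, of "r / 2" y] by auto
    have "norm (?q t - L) < r" if "t \<noteq> 0" and "\<bar>t\<bar> < d" for t
      using gap[of "\<bar>t\<bar>"] upper[of "\<bar>t\<bar>"] lower[of "\<bar>t\<bar>"] that \<open>r > 0\<close>
      by (cases "t > 0") auto
    then show "\<exists>s>0. \<forall>t. t \<noteq> 0 \<and> norm (t - 0) < s \<longrightarrow> norm (?q t - L) < r"
      using \<open>d > 0\<close> by auto
  qed
  with upper lower that show ?thesis by blast
qed

lemma sip_eq_norm_mult_Lim:
  fixes x y :: "'a::real_normed_vector"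
  shows "sip y x = norm x * Lim (at 0) (norm_diff_quotient x y)"
  by (simp add: sip_def norm_diff_quotient_def[abs_def])

lemma sip_bounds:
  fixes x y :: "'a::real_normed_vector"
  assumes "uniformly_smooth TYPE('a)"
  shows "norm x * (norm x - norm (x - y)) \<le> sip y x"
    and "sip y x \<le> norm x * (norm (x + y) - norm x)"
proof -
  have "norm x * (norm x - norm (x - y)) \<le> sip y x
        \<and> sip y x \<le> norm x * (norm (x + y) - norm x)"
  proof (cases "x = 0")
    case True
    then show ?thesis by (simp add: sip_def)
  next
    case False
    obtain L where lim: "(norm_diff_quotient x y \<longlongrightarrow> L) (at 0)"
      and lower: "norm_diff_quotient x y (-1) \<le> L" and upper: "L \<le> norm_diff_quotient x y 1"
      using uniformly_smooth_norm_diff_quotient_tendsto[OF assms False, of y] zero_less_one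
      by metis
    have "Lim (at 0) (norm_diff_quotient x y) = L"
      by (rule tendsto_Lim[OF _ lim]) simp
    then have sip: "sip y x = norm x * L"
      by (simp add: sip_eq_norm_mult_Lim)
    have "norm x - norm (x - y) \<le> L" "L \<le> norm (x + y) - norm x"
      using lower upper by (simp_all add: norm_diff_quotient_def)
    then show ?thesis
      unfolding sip by (simp add: mult_left_mono)
  qed
  then show "norm x * (norm x - norm (x - y)) \<le> sip y x"
    and "sip y x \<le> norm x * (norm (x + y) - norm x)" by auto
qed

lemma sip_self:
  fixes x :: "'a::real_normed_vector"
  assumes "uniformly_smooth TYPE('a)"
  shows "sip x x = (norm x)\<^sup>2"
proof -
  have "norm (x + x) = 2 * norm x"
    by (simp flip: scaleR_2)
  then show ?thesis
    using sip_bounds[OF assms, of x x] by (simp add: power2_eq_square)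
qed

lemma sip_le_norm_mult:
  fixes x y :: "'a::real_normed_vector"
  assumes "uniformly_smooth TYPE('a)"
  shows "sip y x \<le> norm y * norm x"
proof -
  have "norm x * (norm (x + y) - norm x) \<le> norm x * norm y"
    using norm_triangle_ineq[of x y] by (intro mult_left_mono) simp_all
  then show ?thesis
    using sip_bounds(2)[OF assms, of y x] by (simp add: mult.commute)
qed

lemma sip_eq_norm_sq_imp_norm_add_ge:
  fixes x y :: "'a::real_normed_vector"
  assumes "uniformly_smooth TYPE('a)" and "sip y x = (norm x)\<^sup>2"
  shows "2 * norm x \<le> norm (x + y)"
  using sip_bounds(2)[OF assms(1), of y x] assms(2)
  by (cases "x = 0") (auto simp: power2_eq_square)

lemma uniformly_convex_eq_if_norm_add_ge:
  fixes x y :: "'a::real_normed_vector"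
  assumes convex: "uniformly_convex TYPE('a)" and "norm y = norm x"
    and "2 * norm x \<le> norm (x + y)"
  shows "y = x"
proof (rule ccontr)
  assume "y \<noteq> x"
  then have "x \<noteq> 0"
    using assms(2,3) by auto
  define r where "r = norm x"
  have "r > 0"
    using \<open>x \<noteq> 0\<close> by (simp add: r_def)
  define u where "u = (1 / r) *\<^sub>R x"
  define v where "v = (1 / r) *\<^sub>R y"
  have "norm u \<le> 1" "norm v \<le> 1"
    using \<open>r > 0\<close> assms(2) by (simp_all add: u_def v_def r_def)
  moreover have "u - v = (1 / r) *\<^sub>R (x - y)"
    by (simp add: u_def v_def algebra_simps)
  then have "norm (u - v) > 0"
    using \<open>y \<noteq> x\<close> \<open>r > 0\<close> by simp
  ultimately obtain \<delta> where "\<delta> > 0" and mid: "norm ((1/2) *\<^sub>R (u + v)) \<le> 1 - \<delta>"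
    using convex unfolding uniformly_convex_def by blast
  have "(1/2) *\<^sub>R (u + v) = (1 / (2 * r)) *\<^sub>R (x + y)"
    by (simp add: u_def v_def algebra_simps)
  then have "norm ((1/2) *\<^sub>R (u + v)) = norm (x + y) / (2 * r)"
    using \<open>r > 0\<close> by simp
  also have "\<dots> \<ge> 1"
    using assms(3) \<open>r > 0\<close> by (simp add: r_def field_simps)
  finally have "norm ((1/2) *\<^sub>R (u + v)) \<ge> 1" .
  with mid \<open>\<delta> > 0\<close> show False by simp
qed

lemma dual_in_span_sip_eq:
  assumes "dual_in_span m x f" and "interpolates m x y g" and "interpolates m x y h"
  shows "sip g f = sip h f"
proof -
  obtain c where "\<And>w. sip w f = (\<Sum>i<m. c i * sip w (x i))"
    using assms(1) unfolding dual_in_span_def by blast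
  with assms(2,3) show ?thesis
    unfolding interpolates_def by simp
qed

lemma dual_in_span_is_minimiser_norm:
  fixes f :: "'a::real_normed_vector"
  assumes smooth: "uniformly_smooth TYPE('a)"
    and "interpolates m x y f" and "dual_in_span m x f"
  shows "is_minimiser norm m x y f"
  unfolding is_minimiser_def
proof (intro conjI allI impI assms(2))
  fix g assume "interpolates m x y g"
  then have "(norm f)\<^sup>2 \<le> norm g * norm f"
    using dual_in_span_sip_eq[OF assms(3) _ assms(2)] sip_self[OF smooth, of f]
      sip_le_norm_mult[OF smooth, of g f]
    by metis
  then show "norm f \<le> norm g"
    by (cases "f = 0") (auto simp: power2_eq_square)
qed

lemma dual_in_span_is_minimiser_norm_unique:
  fixes f :: "'a::banach"
  assumes uniform: "uniform_space TYPE('a)"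
    and "interpolates m x y f" and "dual_in_span m x f"
    and "is_minimiser norm m x y g"
  shows "g = f"
proof -
  have smooth: "uniformly_smooth TYPE('a)" and convex: "uniformly_convex TYPE('a)"
    using uniform unfolding uniform_space_def by auto
  have g: "interpolates m x y g"
    using assms(4) unfolding is_minimiser_def by blast
  have "norm g = norm f"
    using assms(4) dual_in_span_is_minimiser_norm[OF smooth assms(2,3)] g assms(2)
    unfolding is_minimiser_def by (meson order_antisym)
  moreover have "sip g f = (norm f)\<^sup>2"
    using dual_in_span_sip_eq[OF assms(3) g assms(2)] sip_self[OF smooth] by simp
  then have "2 * norm f \<le> norm (f + g)"
    by (rule sip_eq_norm_sq_imp_norm_add_ge[OF smooth])
  ultimately show ?thesis
    by (rule uniformly_convex_eq_if_norm_add_ge[OF convex])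
qed

theorem mainTheorem5:
  fixes \<Omega> :: "'a::banach \<Rightarrow> real" and m :: nat
    and x :: "nat \<Rightarrow> 'a" and y :: "nat \<Rightarrow> real"
  assumes "uniform_space TYPE('a)"
    and "admissible \<Omega>"
    and "m > 0"
    and "\<exists>f. interpolates m x y f"
  shows "\<exists>f0. is_minimiser \<Omega> m x y f0 \<and> dual_in_span m x f0
           \<and> (\<forall>g. is_minimiser \<Omega> m x y g \<and> dual_in_span m x g \<longrightarrow> g = f0)
           \<and> is_minimiser norm m x y f0
           \<and> (\<forall>g. is_minimiser norm m x y g \<longrightarrow> g = f0)"
proof -
  have smooth: "uniformly_smooth TYPE('a)"
    using assms(1) unfolding uniform_space_def by auto
  obtain f0 where f0: "is_minimiser \<Omega> m x y f0" and span: "dual_in_span m x f0"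
    using assms(2-4) unfolding admissible_def by blast
  have f0_interp: "interpolates m x y f0"
    using f0 unfolding is_minimiser_def by blast
  note unique = dual_in_span_is_minimiser_norm_unique[OF assms(1) f0_interp span]
  have "g = f0" if "is_minimiser \<Omega> m x y g" and "dual_in_span m x g" for g
    using that unique dual_in_span_is_minimiser_norm[OF smooth]
    unfolding is_minimiser_def by blast
  with f0 span unique dual_in_span_is_minimiser_norm[OF smooth f0_interp span]
  show ?thesis by blast
qed

end
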